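(* Let $m\in\mathbb{N}$. (i) There exist curves $\sigma,\tau$ of complexity $m$ in Euclidean space and a parameter $k$ such that the lengths $|T_{(k\text{-}DTW)}|$ and $|T_{(DTW)}|$ of an optimal $k$-DTW traversal and an optimal DTW traversal of $\sigma$ and $\tau$ differ by an amount linear in $m$ (i.e., $\Omega(m)$); moreover, such instances exist both with $|T_{(k\text{-}DTW)}|<|T_{(DTW)}|$ and with $|T_{(k\text{-}DTW)}|>|T_{(DTW)}|$. (ii) Assume $m\ge 5$. Then for every $k$ with $1\le k\le 4\lfloor m/5\rfloor$ there exist curves $\sigma,\tau$ of complexity $m$ such that $d_{k\text{-}DTW}(\sigma,\tau)$ is not equal to the sum of the $k$ largest distances contributing to $d_{DTW}(\sigma,\tau)$ (i.e., the $k$ largest matched distances of a traversal realizing the DTW distance).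
   Context: Curves are vertex sequences in $\mathbb{R}^d$. For $\sigma=(v_1,\dots,v_{m'})$ and $\tau=(w_1,\dots,w_{m''})$ a traversal $T$ is a sequence of index pairs starting with $(1,1)$, ending with $(m',m'')$, where each $(i,j)$ is followed only by $(i+1,j)$, $(i,j+1)$ or $(i+1,j+1)$; $|T|$ is its number of pairs. The DTW distance is $d_{DTW}(\sigma,\tau)=\min_T\sum_{(i,j)\in T}\|v_i-w_j\|$. With $s^{(T)}_1\ge s^{(T)}_2\ge\dots$ the matched distances of $T$ sorted non-increasingly (padded with zeros beyond $|T|$), $d_{k\text{-}DTW}(\sigma,\tau)=\min_T\sum_{l=1}^k s^{(T)}_l$. An optimal DTW (resp. $k$-DTW) traversal is one attaining the respective minimum. *)

theory Defs
  imports Complex_Main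
begin

text \<open>Points of R^d are represented as functions nat => real; only coordinates
  0..d-1 matter.  Curves are vertex lists; index pairs are 0-based.\<close>

definition euclid_dist :: "nat \<Rightarrow> (nat \<Rightarrow> real) \<Rightarrow> (nat \<Rightarrow> real) \<Rightarrow> real" where
  "euclid_dist d x y = sqrt (\<Sum>i<d. (x i - y i)^2)"

definition valid_step :: "nat \<times> nat \<Rightarrow> nat \<times> nat \<Rightarrow> bool" where
  "valid_step p q \<longleftrightarrow> q = (Suc (fst p), snd p) \<or> q = (fst p, Suc (snd p))
                     \<or> q = (Suc (fst p), Suc (snd p))"

definition is_traversal :: "nat \<Rightarrow> nat \<Rightarrow> (nat \<times> nat) list \<Rightarrow> bool" where
  "is_traversal m1 m2 T \<longleftrightarrow> T \<noteq> [] \<and> hd T = (0, 0) \<and> last T = (m1 - 1, m2 - 1)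
     \<and> (\<forall>l. Suc l < length T \<longrightarrow> valid_step (T ! l) (T ! Suc l))"

definition traversals :: "'a list \<Rightarrow> 'a list \<Rightarrow> (nat \<times> nat) list set" where
  "traversals \<sigma> \<tau> = {T. is_traversal (length \<sigma>) (length \<tau>) T}"

definition matched_dists ::
  "nat \<Rightarrow> (nat \<Rightarrow> real) list \<Rightarrow> (nat \<Rightarrow> real) list \<Rightarrow> (nat \<times> nat) list \<Rightarrow> real list" where
  "matched_dists d \<sigma> \<tau> T = map (\<lambda>(i, j). euclid_dist d (\<sigma> ! i) (\<tau> ! j)) T"

definition dtw_cost where
  "dtw_cost d \<sigma> \<tau> T = sum_list (matched_dists d \<sigma> \<tau> T)"

text \<open>k-DTW cost: sum of the k largest matched distances (padding by zeros is
  implicit, since take k of a shorter list just takes the whole list).\<close>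
definition kdtw_cost where
  "kdtw_cost d k \<sigma> \<tau> T = sum_list (take k (rev (sort (matched_dists d \<sigma> \<tau> T))))"

definition d_DTW where
  "d_DTW d \<sigma> \<tau> = Min (dtw_cost d \<sigma> \<tau> ` traversals \<sigma> \<tau>)"

definition d_kDTW where
  "d_kDTW d k \<sigma> \<tau> = Min (kdtw_cost d k \<sigma> \<tau> ` traversals \<sigma> \<tau>)"

definition opt_DTW_trav where
  "opt_DTW_trav d \<sigma> \<tau> T \<longleftrightarrow> T \<in> traversals \<sigma> \<tau> \<and>
     (\<forall>T' \<in> traversals \<sigma> \<tau>. dtw_cost d \<sigma> \<tau> T \<le> dtw_cost d \<sigma> \<tau> T')"

definition opt_kDTW_trav where
  "opt_kDTW_trav d k \<sigma> \<tau> T \<longleftrightarrow> T \<in> traversals \<sigma> \<tau> \<and>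
     (\<forall>T' \<in> traversals \<sigma> \<tau>. kdtw_cost d k \<sigma> \<tau> T \<le> kdtw_cost d k \<sigma> \<tau> T')"

end

theory Submission
  imports Defs
begin

text \<open>
  Part (i), k-DTW traversal shorter: let p_n = e_(n mod s) + (n div s) e_s be the vertices of a
  helix in R^(s+1), with s = m div 8, and take sigma = p_0 ... p_(m-1), tau = p_s ... p_(m+s-1).
  Diagonal pairs are at distance 1 and the pairs next to the diagonal at distance > 1, so the
  optimal 1-DTW traversal is the diagonal. Distinct points are at distance >= 1 and
  sigma_(j+s) = tau_j, so a DTW traversal avoiding the line i = j + s costs at least m, more than
  the O(s) cost of following that line; hence every optimal one meets it and has length >= m + s.

  Part (i), k-DTW traversal longer: place the vertices so that all distances are 1 except between
  interior vertices, where they are sqrt(13/5) < 2. The optimal 1-DTW traversal must avoid the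
  interior block, so it has length >= 2m - 2, while DTW pays at least 1 per pair and at most
  m sqrt(13/5) along the diagonal, so its traversal has length <= m sqrt(13/5).

  Part (ii): make all distances beta = sqrt(2 + m^2) except alpha = sqrt(4 + m^2) on the interior
  of the diagonal. As m alpha < (m + 1) beta, every optimal DTW traversal is the diagonal, and its
  k largest distances include alpha, whereas the diagonal shifted by one achieves k beta.
\<close>

lemma last_sort_eq_Max:
  fixes xs :: "'a::linorder list"
  assumes "xs \<noteq> []"
  shows "last (sort xs) = Max (set xs)"
proof (rule Max_eqI[symmetric])
  have ne: "sort xs \<noteq> []" using assms by (metis length_0_conv length_sort)
  then show "last (sort xs) \<in> set xs" by (metis last_in_set set_sort)
  fix y assume "y \<in> set xs"
  then obtain i where i: "i < length (sort xs)" "sort xs ! i = y" by (metis in_set_conv_nth set_sort)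
  have "sort xs ! i \<le> sort xs ! (length (sort xs) - 1)"
    using i(1) by (intro sorted_nth_mono) auto
  then show "y \<le> last (sort xs)" using i ne by (simp add: last_conv_nth)
qed auto

lemma top_sum_eq_Max_plus:
  fixes xs :: "'a::{linorder, monoid_add} list"
  assumes "xs \<noteq> []" "0 < k"
  shows "sum_list (take k (rev (sort xs))) = Max (set xs) + sum_list (take (k - 1) (tl (rev (sort xs))))"
proof -
  have "rev (sort xs) \<noteq> []" using assms(1) by (metis length_0_conv length_rev length_sort)
  then obtain y ys where ys: "rev (sort xs) = y # ys" by (cases "rev (sort xs)") auto
  have "y = Max (set xs)"
    using arg_cong[OF ys, of "\<lambda>zs. last (rev zs)"] last_sort_eq_Max[OF assms(1)] by simp
  then show ?thesis using ys assms(2) by (cases k) auto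
qed

lemma sum_list_map_le_length_mult:
  fixes f :: "'a \<Rightarrow> real"
  assumes "\<And>x. x \<in> set xs \<Longrightarrow> f x \<le> b"
  shows "sum_list (map f xs) \<le> real (length xs) * b"
  using sum_list_mono[of xs f "\<lambda>_. b"] assms by (simp add: sum_list_triv)

lemma length_mult_le_sum_list_map:
  fixes f :: "'a \<Rightarrow> real"
  assumes "\<And>x. x \<in> set xs \<Longrightarrow> b \<le> f x"
  shows "real (length xs) * b \<le> sum_list (map f xs)"
  using sum_list_mono[of xs "\<lambda>_. b" f] assms by (simp add: sum_list_triv)

lemma top_sum_le:
  fixes xs :: "real list"
  assumes "\<And>x. x \<in> set xs \<Longrightarrow> x \<le> b" and "0 \<le> b"
  shows "sum_list (take k (rev (sort xs))) \<le> real k * b"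
proof -
  let ?top = "take k (rev (sort xs))"
  have "\<And>x. x \<in> set ?top \<Longrightarrow> x \<le> b" using assms(1) by (auto dest: in_set_takeD)
  then have "sum_list ?top \<le> real (length ?top) * b"
    using sum_list_map_le_length_mult[of ?top "\<lambda>x. x" b] by simp
  also have "\<dots> \<le> real k * b"
    using assms(2) by (auto intro: mult_right_mono)
  finally show ?thesis .
qed

lemma member_le_top_sum:
  fixes xs :: "real list"
  assumes "\<And>x. x \<in> set xs \<Longrightarrow> 0 \<le> x" and "z \<in> set xs" and "0 < k"
  shows "z \<le> sum_list (take k (rev (sort xs)))"
proof -
  have "set (tl (rev (sort xs))) \<subseteq> set xs"
    by (metis list.sel(2) list.set_sel(2) set_rev set_sort subsetI)
  then have "0 \<le> sum_list (take (k - 1) (tl (rev (sort xs))))"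
    using assms(1) by (intro sum_list_nonneg) (auto dest: in_set_takeD)
  moreover have "z \<le> Max (set xs)" using assms(2) by simp
  moreover have "xs \<noteq> []" using assms(2) by auto
  ultimately show ?thesis using top_sum_eq_Max_plus[of xs k] assms(3) by linarith
qed

lemma top_sum_gt:
  fixes xs :: "real list"
  assumes "\<And>x. x \<in> set xs \<Longrightarrow> b \<le> x" and "z \<in> set xs" "b < z" and "0 < k" "k \<le> length xs"
  shows "real k * b < sum_list (take k (rev (sort xs)))"
proof -
  let ?rest = "take (k - 1) (tl (rev (sort xs)))"
  have rest: "set (tl (rev (sort xs))) \<subseteq> set xs"
    by (metis list.sel(2) list.set_sel(2) set_rev set_sort subsetI)
  have "real (length ?rest) * b \<le> sum_list ?rest"
    using length_mult_le_sum_list_map[of ?rest b "\<lambda>x. x"] assms(1) rest by (auto dest: in_set_takeD)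
  moreover have "length ?rest = k - 1" using assms(5) by simp
  moreover have "b < Max (set xs)" using assms(2,3) by (meson Max_ge finite_set less_le_trans)
  moreover have "xs \<noteq> []" using assms(2) by auto
  ultimately show ?thesis
    using top_sum_eq_Max_plus[of xs k] assms(4) by (simp add: of_nat_diff algebra_simps)
qed

lemma valid_step_bounds:
  assumes "valid_step p q"
  shows "fst p \<le> fst q" "fst q \<le> Suc (fst p)" "snd p \<le> snd q" "snd q \<le> Suc (snd p)"
    "Suc (fst p + snd p) \<le> fst q + snd q"
  using assms unfolding valid_step_def by auto

lemma traversal_mono:
  assumes T: "is_traversal m1 m2 T" and "l \<le> l'" "l' < length T"
  shows "fst (T ! l) \<le> fst (T ! l') \<and> fst (T ! l') \<le> fst (T ! l) + (l' - l)
       \<and> snd (T ! l) \<le> snd (T ! l') \<and> snd (T ! l') \<le> snd (T ! l) + (l' - l)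
       \<and> fst (T ! l) + snd (T ! l) + (l' - l) \<le> fst (T ! l') + snd (T ! l')"
  using assms(2,3)
proof (induction l' rule: dec_induct)
  case base
  then show ?case by simp
next
  case (step n)
  have "valid_step (T ! n) (T ! Suc n)" using T step.prems unfolding is_traversal_def by auto
  then show ?case using valid_step_bounds[of "T ! n" "T ! Suc n"] step by auto
qed

lemma traversal_start:
  assumes "is_traversal m1 m2 T"
  shows "T ! 0 = (0, 0)" "(0, 0) \<in> set T"
  using assms unfolding is_traversal_def by (auto simp: hd_conv_nth dest: list.set_sel(1))

lemma traversal_nth_bounds:
  assumes T: "is_traversal m1 m2 T" and l: "l < length T" and Tl: "T ! l = (i, j)"
  shows "i \<le> l" "j \<le> l" "l \<le> i + j" "i \<le> m1 - 1" "j \<le> m2 - 1"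
    "m1 - 1 \<le> i + (length T - 1 - l)" "m2 - 1 \<le> j + (length T - 1 - l)"
proof -
  have first: "T ! 0 = (0, 0)" and last: "T ! (length T - 1) = (m1 - 1, m2 - 1)"
    using T unfolding is_traversal_def by (auto simp: hd_conv_nth last_conv_nth)
  show "i \<le> l" "j \<le> l" "l \<le> i + j"
    using traversal_mono[OF T, of 0 l] first Tl l by auto
  show "i \<le> m1 - 1" "j \<le> m2 - 1" "m1 - 1 \<le> i + (length T - 1 - l)" "m2 - 1 \<le> j + (length T - 1 - l)"
    using traversal_mono[OF T, of l "length T - 1"] last Tl l by auto
qed

lemma traversal_cell_less:
  assumes "is_traversal m1 m2 T" "0 < m1" "0 < m2" "(i, j) \<in> set T"
  shows "i < m1" "j < m2"
  using traversal_nth_bounds[OF assms(1)] assms(2-4) by (fastforce simp: in_set_conv_nth)+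

lemma traversal_length_ge_offset:
  assumes "is_traversal m m T" "(i, j) \<in> set T"
  shows "m + (i - j) \<le> length T" "m + (j - i) \<le> length T"
proof -
  obtain l where "l < length T" "T ! l = (i, j)" using assms(2) by (auto simp: in_set_conv_nth)
  with traversal_nth_bounds[OF assms(1) this]
  show "m + (i - j) \<le> length T" "m + (j - i) \<le> length T" by auto
qed

lemma traversal_length_ge:
  assumes "is_traversal m m T"
  shows "m \<le> length T"
  using traversal_length_ge_offset(1)[OF assms traversal_start(2)[OF assms]] by simp

lemma finite_traversals: "finite (traversals \<sigma> \<tau>)"
proof -
  let ?m1 = "length \<sigma>" and ?m2 = "length \<tau>"
  have "traversals \<sigma> \<tau> \<subseteq> {T. set T \<subseteq> {..?m1} \<times> {..?m2} \<and> length T \<le> ?m1 + ?m2 + 1}"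
  proof
    fix T assume "T \<in> traversals \<sigma> \<tau>"
    then have T: "is_traversal ?m1 ?m2 T" unfolding traversals_def by simp
    then have "T ! (length T - 1) = (?m1 - 1, ?m2 - 1)" "T \<noteq> []"
      unfolding is_traversal_def by (auto simp: last_conv_nth)
    then have "length T \<le> ?m1 + ?m2 + 1"
      using traversal_nth_bounds(3)[OF T, of "length T - 1"] by simp
    moreover have "set T \<subseteq> {..?m1} \<times> {..?m2}"
      using traversal_nth_bounds(4,5)[OF T] by (fastforce simp: in_set_conv_nth)
    ultimately show "T \<in> {T. set T \<subseteq> {..?m1} \<times> {..?m2} \<and> length T \<le> ?m1 + ?m2 + 1}" by simp
  qed
  moreover have "finite {T. set T \<subseteq> {..?m1} \<times> {..?m2} \<and> length T \<le> ?m1 + ?m2 + 1}"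
    by (rule finite_lists_length_le) auto
  ultimately show ?thesis by (rule finite_subset)
qed

lemma traversal_meets_antidiagonal:
  assumes T: "is_traversal m1 m2 T" and "S + 2 \<le> m1 + m2"
  shows "\<exists>(i, j) \<in> set T. S \<le> i + j \<and> i + j \<le> S + 1"
  using assms(2)
proof (induction S)
  case 0
  show ?case using traversal_start(2)[OF T] by (auto intro!: bexI[of _ "(0, 0)"])
next
  case (Suc S)
  then obtain l where l: "l < length T" "S \<le> fst (T!l) + snd (T!l)" "fst (T!l) + snd (T!l) \<le> S + 1"
    by (auto simp: in_set_conv_nth)
  show ?case
  proof (cases "fst (T!l) + snd (T!l) = S + 1")
    case True
    then show ?thesis using l(1) by (auto simp: in_set_conv_nth intro!: bexI[of _ "T!l"])
  next
    case False
    have "l \<noteq> length T - 1"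
      using False l traversal_nth_bounds(6,7)[OF T l(1), of "fst (T!l)" "snd (T!l)"] Suc.prems by auto
    then have "Suc l < length T" using l(1) by simp
    moreover have "valid_step (T!l) (T!Suc l)" using T calculation unfolding is_traversal_def by simp
    ultimately show ?thesis
      using valid_step_bounds[of "T!l" "T!Suc l"] False l
      by (auto simp: in_set_conv_nth intro!: bexI[of _ "T!Suc l"])
  qed
qed

lemma traversal_of_length_diagonal:
  assumes T: "is_traversal m m T" and "length T = m" "l < m"
  shows "T ! l = (l, l)"
  using traversal_nth_bounds[OF T, of l "fst (T!l)" "snd (T!l)"] assms(2,3) by (cases "T!l") auto

lemma traversal_avoiding_offdiagonal_length:
  assumes T: "is_traversal m m T" and "0 < m"
    and off: "\<And>j. (Suc j, j) \<notin> set T" "\<And>j. (j, Suc j) \<notin> set T"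
  shows "length T = m"
proof -
  have diag: "T ! l = (l, l)" if "l < length T" for l
    using that
  proof (induction l)
    case 0
    then show ?case using traversal_start(1)[OF T] by simp
  next
    case (Suc l)
    have "valid_step (l, l) (T ! Suc l)" using T Suc unfolding is_traversal_def by fastforce
    moreover have "T ! Suc l \<in> set T" using Suc.prems by simp
    ultimately show ?case using off unfolding valid_step_def by auto
  qed
  have "T \<noteq> []" and "T ! (length T - 1) = (m - 1, m - 1)"
    using T unfolding is_traversal_def by (auto simp: last_conv_nth)
  then show ?thesis using diag[of "length T - 1"] assms(2) by (cases T) auto
qed

text \<open>
  By truncated subtraction the pairs are (0, 0), ..., (s, 0), then (l, l - s) up to l = m - 1,
  then (m - 1, l - s) up to (m - 1, m - 1); for s = 0 this is the diagonal.
\<close>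
definition shifted_diagonal :: "nat \<Rightarrow> nat \<Rightarrow> (nat \<times> nat) list" where
  "shifted_diagonal m s = map (\<lambda>l. (min l (m - 1), l - s)) [0..<m + s]"

lemma mem_shifted_diagonal:
  "(i, j) \<in> set (shifted_diagonal m s) \<longleftrightarrow> (\<exists>l < m + s. i = min l (m - 1) \<and> j = l - s)"
  unfolding shifted_diagonal_def by (auto simp del: upt_Suc)

lemma is_traversal_shifted_diagonal:
  assumes "s < m"
  shows "is_traversal m m (shifted_diagonal m s)"
  unfolding is_traversal_def
proof (intro conjI allI impI)
  show "shifted_diagonal m s \<noteq> []" "hd (shifted_diagonal m s) = (0, 0)"
    using assms by (auto simp: shifted_diagonal_def hd_map)
  show "last (shifted_diagonal m s) = (m - 1, m - 1)"
    using assms by (auto simp: shifted_diagonal_def last_map)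
  fix l assume "Suc l < length (shifted_diagonal m s)"
  then show "valid_step (shifted_diagonal m s ! l) (shifted_diagonal m s ! Suc l)"
    using assms by (auto simp: shifted_diagonal_def valid_step_def nth_append simp del: upt_Suc)
qed

lemma euclid_dist_nonneg: "0 \<le> euclid_dist d x y"
  unfolding euclid_dist_def by (simp add: sum_nonneg)

lemma euclid_dist_self [simp]: "euclid_dist d x x = 0"
  unfolding euclid_dist_def by simp

lemma set_matched_dists:
  "set (matched_dists d \<sigma> \<tau> T) = (\<lambda>(i, j). euclid_dist d (\<sigma> ! i) (\<tau> ! j)) ` set T"
  by (simp add: matched_dists_def)

lemma dtw_cost_le:
  assumes "\<And>i j. (i, j) \<in> set T \<Longrightarrow> euclid_dist d (\<sigma> ! i) (\<tau> ! j) \<le> b"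
  shows "dtw_cost d \<sigma> \<tau> T \<le> real (length T) * b"
  unfolding dtw_cost_def matched_dists_def
  using sum_list_map_le_length_mult[of T _ b] assms by auto

lemma dtw_cost_ge:
  assumes "\<And>i j. (i, j) \<in> set T \<Longrightarrow> b \<le> euclid_dist d (\<sigma> ! i) (\<tau> ! j)"
  shows "real (length T) * b \<le> dtw_cost d \<sigma> \<tau> T"
  unfolding dtw_cost_def matched_dists_def
  using length_mult_le_sum_list_map[of T b] assms by auto

lemma kdtw_cost_le:
  assumes "\<And>i j. (i, j) \<in> set T \<Longrightarrow> euclid_dist d (\<sigma> ! i) (\<tau> ! j) \<le> b" and "0 \<le> b"
  shows "kdtw_cost d k \<sigma> \<tau> T \<le> real k * b"
  unfolding kdtw_cost_def using assms by (intro top_sum_le) (auto simp: set_matched_dists)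

lemma dist_le_kdtw_cost:
  assumes "(i, j) \<in> set T" and "0 < k"
  shows "euclid_dist d (\<sigma> ! i) (\<tau> ! j) \<le> kdtw_cost d k \<sigma> \<tau> T"
  unfolding kdtw_cost_def using assms
  by (intro member_le_top_sum) (auto simp: set_matched_dists euclid_dist_nonneg)

lemma kdtw_cost_gt:
  assumes "\<And>i j. (i, j) \<in> set T \<Longrightarrow> b \<le> euclid_dist d (\<sigma> ! i) (\<tau> ! j)"
    and "(i, j) \<in> set T" "b < euclid_dist d (\<sigma> ! i) (\<tau> ! j)" and "0 < k" "k \<le> length T"
  shows "real k * b < kdtw_cost d k \<sigma> \<tau> T"
  unfolding kdtw_cost_def using assms
  by (intro top_sum_gt[where z = "euclid_dist d (\<sigma> ! i) (\<tau> ! j)"])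
    (auto simp: set_matched_dists matched_dists_def)

lemma d_kDTW_le: "T \<in> traversals \<sigma> \<tau> \<Longrightarrow> d_kDTW d k \<sigma> \<tau> \<le> kdtw_cost d k \<sigma> \<tau> T"
  unfolding d_kDTW_def using finite_traversals by (intro Min_le) auto

lemma opt_kDTW1_trav_cell_le:
  assumes "opt_kDTW_trav d 1 \<sigma> \<tau> T" and "T' \<in> traversals \<sigma> \<tau>" and "0 \<le> b"
    and "\<And>i j. (i, j) \<in> set T' \<Longrightarrow> euclid_dist d (\<sigma> ! i) (\<tau> ! j) \<le> b"
    and "(i, j) \<in> set T"
  shows "euclid_dist d (\<sigma> ! i) (\<tau> ! j) \<le> b"
proof -
  have "euclid_dist d (\<sigma> ! i) (\<tau> ! j) \<le> kdtw_cost d 1 \<sigma> \<tau> T"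
    using assms(5) by (rule dist_le_kdtw_cost) simp
  also have "\<dots> \<le> kdtw_cost d 1 \<sigma> \<tau> T'" using assms(1,2) unfolding opt_kDTW_trav_def by blast
  also have "\<dots> \<le> b" using kdtw_cost_le[of T' d \<sigma> \<tau> b 1] assms(3,4) by simp
  finally show ?thesis .
qed

lemma opt_DTW_trav_length_bound:
  assumes opt: "opt_DTW_trav d \<sigma> \<tau> T" and m: "length \<sigma> = m" "length \<tau> = m" "0 < m"
    and lo: "\<And>i j. i < m \<Longrightarrow> j < m \<Longrightarrow> lo \<le> euclid_dist d (\<sigma> ! i) (\<tau> ! j)"
    and hi: "\<And>i. i < m \<Longrightarrow> euclid_dist d (\<sigma> ! i) (\<tau> ! i) \<le> hi"
  shows "real (length T) * lo \<le> real m * hi"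
proof -
  have T: "is_traversal m m T" using opt m unfolding opt_DTW_trav_def traversals_def by simp
  have diag: "shifted_diagonal m 0 \<in> traversals \<sigma> \<tau>"
    using is_traversal_shifted_diagonal[of 0 m] m unfolding traversals_def by simp
  have "real (length T) * lo \<le> dtw_cost d \<sigma> \<tau> T"
    using lo traversal_cell_less[OF T m(3) m(3)] by (intro dtw_cost_ge) auto
  also have "\<dots> \<le> dtw_cost d \<sigma> \<tau> (shifted_diagonal m 0)"
    using opt diag unfolding opt_DTW_trav_def by blast
  also have "\<dots> \<le> real m * hi"
    using dtw_cost_le[of "shifted_diagonal m 0" d \<sigma> \<tau> hi] hi
    by (fastforce simp: shifted_diagonal_def)
  finally show ?thesis .
qed

definition helix :: "nat \<Rightarrow> nat \<Rightarrow> nat \<Rightarrow> real" where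
  "helix s n = (\<lambda>c. (if c = n mod s then 1 else 0) + (if c = s then real (n div s) else 0))"

definition helix_curve :: "nat \<Rightarrow> nat \<Rightarrow> nat \<Rightarrow> (nat \<Rightarrow> real) list" where
  "helix_curve s m a = map (\<lambda>i. helix s (i + a)) [0..<m]"

lemma euclid_dist_helix:
  assumes "0 < s"
  shows "euclid_dist (Suc s) (helix s a) (helix s b) =
    sqrt ((if a mod s = b mod s then 0 else 2) + (real (a div s) - real (b div s))^2)"
proof -
  have lt: "a mod s < s" "b mod s < s" using assms by auto
  then have ne: "s \<noteq> a mod s" "s \<noteq> b mod s" by linarith+
  have "(helix s a c - helix s b c)^2 = (if c = a mod s then 1 else 0) + (if c = b mod s then 1 else 0)
      - (if a mod s = b mod s \<and> c = a mod s then 2 else 0)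
      + (if c = s then (real (a div s) - real (b div s))^2 else 0)" for c
  proof (cases "c = s")
    case True
    with ne show ?thesis unfolding helix_def by simp
  next
    case False
    then show ?thesis unfolding helix_def by (auto simp: power2_eq_square)
  qed
  with lt ne show ?thesis
    unfolding euclid_dist_def by (simp add: sum.distrib sum_subtractf)
qed

lemma helix_dist_period: "0 < s \<Longrightarrow> euclid_dist (Suc s) (helix s a) (helix s (a + s)) = 1"
  by (simp add: euclid_dist_helix)

lemma helix_dist_gt_1:
  assumes "0 < s" "a mod s \<noteq> b mod s"
  shows "1 < euclid_dist (Suc s) (helix s a) (helix s b)"
proof -
  have "1\<^sup>2 < 2 + (real (a div s) - real (b div s))^2"
    using zero_le_power2[of "real (a div s) - real (b div s)"] unfolding power_one by linarith
  then have "1 < sqrt (2 + (real (a div s) - real (b div s))^2)" by (rule real_less_rsqrt)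
  then show ?thesis using assms by (simp add: euclid_dist_helix)
qed

lemma helix_dist_ge_1:
  assumes "0 < s" "a \<noteq> b"
  shows "1 \<le> euclid_dist (Suc s) (helix s a) (helix s b)"
proof (cases "a mod s = b mod s")
  case True
  then have "a div s \<noteq> b div s" using assms(2) div_mult_mod_eq[of a s] div_mult_mod_eq[of b s] by auto
  then have "1 \<le> \<bar>real (a div s) - real (b div s)\<bar>" by linarith
  then show ?thesis unfolding euclid_dist_helix[OF assms(1)] using True by (simp add: real_le_rsqrt)
next
  case False
  then show ?thesis using helix_dist_gt_1[OF assms(1)] by fastforce
qed

lemma helix_dist_le_2:
  assumes "0 < s" "a \<le> b" "b \<le> a + s"
  shows "euclid_dist (Suc s) (helix s a) (helix s b) \<le> 2"
proof -
  have "a div s \<le> b div s" "b div s \<le> a div s + 1"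
    using assms div_le_mono[of b "a + s" s] by (auto intro: div_le_mono)
  then have "(real (a div s) - real (b div s))^2 \<le> 1"
    unfolding abs_square_le_1 by linarith
  then have "euclid_dist (Suc s) (helix s a) (helix s b) \<le> sqrt 4"
    unfolding euclid_dist_helix[OF assms(1)] by (intro real_sqrt_le_mono) simp
  then show ?thesis by simp
qed

lemma length_helix_curve [simp]: "length (helix_curve s m a) = m"
  by (simp add: helix_curve_def)

lemma nth_helix_curve [simp]: "i < m \<Longrightarrow> helix_curve s m a ! i = helix s (i + a)"
  by (simp add: helix_curve_def)

lemma Suc_mod_neq:
  assumes "1 < s"
  shows "Suc b mod s \<noteq> b mod s"
proof (cases "Suc (b mod s) = s")
  case True
  then have "b mod s \<noteq> 0" using assms by auto
  with True show ?thesis by (simp add: mod_Suc)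
next
  case False
  then show ?thesis by (simp add: mod_Suc)
qed

lemma helix_opt_kDTW1_length:
  assumes s: "2 \<le> s" "s < m"
    and opt: "opt_kDTW_trav (Suc s) 1 (helix_curve s m 0) (helix_curve s m s) T"
  shows "length T = m"
proof -
  let ?\<sigma> = "helix_curve s m 0" and ?\<tau> = "helix_curve s m s"
  have T: "is_traversal m m T" using opt by (simp add: opt_kDTW_trav_def traversals_def)
  have "shifted_diagonal m 0 \<in> traversals ?\<sigma> ?\<tau>"
    using is_traversal_shifted_diagonal[of 0 m] s by (simp add: traversals_def)
  then have close: "euclid_dist (Suc s) (?\<sigma> ! i) (?\<tau> ! j) \<le> 1" if "(i, j) \<in> set T" for i j
    using s by (intro opt_kDTW1_trav_cell_le[OF opt _ _ _ that])
      (auto simp: shifted_diagonal_def helix_dist_period)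
  have far: "\<not> euclid_dist (Suc s) (?\<sigma> ! i) (?\<tau> ! j) \<le> 1"
    if "(i, j) \<in> set T" "i = Suc j \<or> j = Suc i" for i j
  proof -
    have "i < m" "j < m" using traversal_cell_less[OF T _ _ that(1)] s by auto
    moreover have "i mod s \<noteq> (j + s) mod s"
      using that(2) Suc_mod_neq[of s i] Suc_mod_neq[of s j] s by auto
    ultimately show ?thesis using helix_dist_gt_1[of s i "j + s"] s by simp
  qed
  show ?thesis
  proof (rule traversal_avoiding_offdiagonal_length[OF T])
    show "0 < m" using s by simp
    show "(Suc j, j) \<notin> set T" "(j, Suc j) \<notin> set T" for j
      using close far by blast+
  qed
qed

lemma dtw_cost_helix_shifted_diagonal:
  assumes s: "0 < s" "s < m"
  shows "dtw_cost (Suc s) (helix_curve s m 0) (helix_curve s m s) (shifted_diagonal m s) \<le> 4 * real s + 2"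
proof -
  let ?c = "\<lambda>l. euclid_dist (Suc s) (helix s (min l (m - 1))) (helix s (l - s + s))"
  have "[0..<m + s] = [0..<Suc s] @ [Suc s..<m] @ [m..<m + s]"
    using s upt_add_eq_append[of 0 "Suc s" "m - 1"] upt_add_eq_append[of "Suc s" m s] by (simp add: add.commute)
  moreover have "matched_dists (Suc s) (helix_curve s m 0) (helix_curve s m s) (shifted_diagonal m s)
      = map ?c [0..<m + s]"
    unfolding matched_dists_def shifted_diagonal_def using s by (auto simp: min_def)
  ultimately have "dtw_cost (Suc s) (helix_curve s m 0) (helix_curve s m s) (shifted_diagonal m s)
      = sum_list (map ?c [0..<Suc s]) + sum_list (map ?c [Suc s..<m]) + sum_list (map ?c [m..<m + s])"
    unfolding dtw_cost_def by simp
  also have "\<dots> \<le> real (Suc s) * 2 + real (m - Suc s) * 0 + real s * 2"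
  proof (intro add_mono)
    have "?c l \<le> 2" if "l \<in> set [0..<Suc s]" for l
      using that s by (intro helix_dist_le_2) auto
    then show "sum_list (map ?c [0..<Suc s]) \<le> real (Suc s) * 2"
      using sum_list_map_le_length_mult[of "[0..<Suc s]" ?c 2] by simp
    have "?c l \<le> 0" if "l \<in> set [Suc s..<m]" for l
      using that by (auto simp: min_def)
    then show "sum_list (map ?c [Suc s..<m]) \<le> real (m - Suc s) * 0"
      using sum_list_map_le_length_mult[of "[Suc s..<m]" ?c 0] by simp
    have "?c l \<le> 2" if "l \<in> set [m..<m + s]" for l
    proof -
      have "min l (m - 1) = m - 1" "l - s + s = l" "m - 1 \<le> l" "l \<le> m - 1 + s"
        using that s by auto
      then show ?thesis using helix_dist_le_2[of s "m - 1" l] s by simp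
    qed
    then show "sum_list (map ?c [m..<m + s]) \<le> real s * 2"
      using sum_list_map_le_length_mult[of "[m..<m + s]" ?c 2] by simp
  qed
  finally show ?thesis by simp
qed

lemma helix_opt_DTW_length:
  assumes s: "0 < s" "4 * s + 2 < m"
    and opt: "opt_DTW_trav (Suc s) (helix_curve s m 0) (helix_curve s m s) T"
  shows "m + s \<le> length T"
proof -
  let ?\<sigma> = "helix_curve s m 0" and ?\<tau> = "helix_curve s m s"
  have T: "is_traversal m m T" using opt by (simp add: opt_DTW_trav_def traversals_def)
  have "\<exists>j. (j + s, j) \<in> set T"
  proof (rule ccontr)
    assume none: "\<nexists>j. (j + s, j) \<in> set T"
    have "1 \<le> euclid_dist (Suc s) (?\<sigma> ! i) (?\<tau> ! j)" if "(i, j) \<in> set T" for i j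
    proof -
      have "i < m" "j < m" using traversal_cell_less[OF T _ _ that] s by auto
      moreover have "i \<noteq> j + s" using that none by auto
      ultimately show ?thesis using helix_dist_ge_1[OF s(1)] by simp
    qed
    then have "real (length T) * 1 \<le> dtw_cost (Suc s) ?\<sigma> ?\<tau> T" by (rule dtw_cost_ge)
    also have "\<dots> \<le> dtw_cost (Suc s) ?\<sigma> ?\<tau> (shifted_diagonal m s)"
      using opt is_traversal_shifted_diagonal[of s m] s unfolding opt_DTW_trav_def traversals_def by simp
    also have "\<dots> \<le> 4 * real s + 2"
      using s by (intro dtw_cost_helix_shifted_diagonal) auto
    finally show False using traversal_length_ge[OF T] s by linarith
  qed
  then show ?thesis using traversal_length_ge_offset(1)[OF T] by fastforce
qed

definition bump_curve :: "nat \<Rightarrow> 'a \<Rightarrow> 'a \<Rightarrow> 'a list" where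
  "bump_curve m p q = map (\<lambda>i. if 0 < i \<and> i < m - 1 then q else p) [0..<m]"

lemma length_bump_curve [simp]: "length (bump_curve m p q) = m"
  by (simp add: bump_curve_def)

lemma nth_bump_curve [simp]: "i < m \<Longrightarrow> bump_curve m p q ! i = (if 0 < i \<and> i < m - 1 then q else p)"
  by (simp add: bump_curve_def)

definition bump_\<sigma> :: "nat \<Rightarrow> (nat \<Rightarrow> real) list" where
  "bump_\<sigma> m = bump_curve m (\<lambda>_. 0) (\<lambda>_. 1)"

definition bump_\<tau> :: "nat \<Rightarrow> (nat \<Rightarrow> real) list" where
  "bump_\<tau> m = bump_curve m (\<lambda>c. if c = 0 then 1 else 0) (\<lambda>c. if c = 0 then - 3/5 else 4/5)"

lemma length_bump_curves [simp]: "length (bump_\<sigma> m) = m" "length (bump_\<tau> m) = m"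
  by (simp_all add: bump_\<sigma>_def bump_\<tau>_def)

lemma euclid_dist_2: "euclid_dist 2 x y = sqrt ((x 0 - y 0)^2 + (x 1 - y 1)^2)"
  unfolding euclid_dist_def by (simp add: numeral_2_eq_2)

lemma euclid_dist_bump:
  assumes "i < m" "j < m"
  shows "euclid_dist 2 (bump_\<sigma> m ! i) (bump_\<tau> m ! j) =
    (if 0 < i \<and> i < m - 1 \<and> 0 < j \<and> j < m - 1 then sqrt (13/5) else 1)"
  using assms by (simp add: bump_\<sigma>_def bump_\<tau>_def euclid_dist_2 power2_eq_square)

lemma bump_opt_kDTW1_length:
  assumes m: "3 \<le> m" and opt: "opt_kDTW_trav 2 1 (bump_\<sigma> m) (bump_\<tau> m) T"
  shows "2 * m - 2 \<le> length T"
proof -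
  have T: "is_traversal m m T" using opt by (simp add: opt_kDTW_trav_def traversals_def)
  have "shifted_diagonal m (m - 1) \<in> traversals (bump_\<sigma> m) (bump_\<tau> m)"
    using is_traversal_shifted_diagonal[of "m - 1" m] m
    by (simp add: traversals_def)
  then have close: "euclid_dist 2 (bump_\<sigma> m ! i) (bump_\<tau> m ! j) \<le> 1" if "(i, j) \<in> set T" for i j
    using m by (intro opt_kDTW1_trav_cell_le[OF opt _ _ _ that])
      (auto simp: shifted_diagonal_def euclid_dist_bump min_def)
  obtain i j where ij: "(i, j) \<in> set T" "m - 1 \<le> i + j" "i + j \<le> m"
    using traversal_meets_antidiagonal[OF T, of "m - 1"] m by auto
  have "i < m" "j < m" using traversal_cell_less[OF T _ _ ij(1)] m by auto
  then have "\<not> (0 < i \<and> i < m - 1 \<and> 0 < j \<and> j < m - 1)"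
    using close[OF ij(1)] by (auto simp: euclid_dist_bump)
  then have "m - 2 \<le> i - j \<or> m - 2 \<le> j - i" using ij(2,3) \<open>i < m\<close> \<open>j < m\<close> by auto
  then show ?thesis using traversal_length_ge_offset[OF T ij(1)] by auto
qed

lemma bump_opt_DTW_length:
  assumes m: "0 < m" and opt: "opt_DTW_trav 2 (bump_\<sigma> m) (bump_\<tau> m) T"
  shows "real (length T) \<le> sqrt (13/5) * real m"
proof -
  have "1 \<le> sqrt (13/5::real)" by simp
  then have "real (length T) * 1 \<le> real m * sqrt (13/5)"
    using m by (intro opt_DTW_trav_length_bound[OF opt]) (auto simp: euclid_dist_bump)
  then show ?thesis by (simp add: mult.commute)
qed

definition basis_\<sigma> :: "nat \<Rightarrow> (nat \<Rightarrow> real) list" where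
  "basis_\<sigma> m = map (\<lambda>i c. (if c = i then 1 else 0) + (if c = Suc m then real m else 0)) [0..<m]"

definition basis_\<tau> :: "nat \<Rightarrow> (nat \<Rightarrow> real) list" where
  "basis_\<tau> m = map (\<lambda>j c. if c = (if 0 < j \<and> j < m - 1 then j else m) then - 1 else 0) [0..<m]"

lemma length_basis_curves [simp]: "length (basis_\<sigma> m) = m" "length (basis_\<tau> m) = m"
  by (simp_all add: basis_\<sigma>_def basis_\<tau>_def)

lemma euclid_dist_basis:
  assumes "i < m" "j < m"
  shows "euclid_dist (m + 2) (basis_\<sigma> m ! i) (basis_\<tau> m ! j) =
    sqrt (2 + (real m)^2 + (if i = j \<and> 0 < j \<and> j < m - 1 then 2 else 0))"
proof -
  define g where "g = (if 0 < j \<and> j < m - 1 then j else m)"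
  have g: "g \<le> m" "i = g \<longleftrightarrow> i = j \<and> 0 < j \<and> j < m - 1" using assms unfolding g_def by auto
  have "(basis_\<sigma> m ! i) c - (basis_\<tau> m ! j) c =
      (if c = i then 1 else 0) + (if c = g then 1 else 0) + (if c = Suc m then real m else 0)" for c
    using assms g(1) by (simp add: basis_\<sigma>_def basis_\<tau>_def g_def)
  then have "((basis_\<sigma> m ! i) c - (basis_\<tau> m ! j) c)^2 = (if c = i then 1 else 0) + (if c = g then 1 else 0)
      + (if c = i then (if i = g then 2 else 0) else 0) + (if c = Suc m then (real m)^2 else 0)" for c
    using assms g(1) by (auto simp: power2_eq_square)
  then show ?thesis
    using assms g unfolding euclid_dist_def by (simp add: sum.distrib)
qed

lemma mult_sqrt_4_less_mult_sqrt_2: "real m * sqrt (4 + (real m)^2) < (real m + 1) * sqrt (2 + (real m)^2)"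
proof -
  have "real m * sqrt (4 + (real m)^2) = sqrt ((real m)^2 * (4 + (real m)^2))"
    by (simp add: real_sqrt_mult)
  also have "\<dots> < sqrt ((real m + 1)^2 * (2 + (real m)^2))"
  proof (rule real_sqrt_less_mono)
    have "(real m)^2 \<le> (real m)^3" by (cases "m = 0") (auto intro: power_increasing)
    then have "0 < 2 * (real m)^3 - (real m)^2 + 4 * real m + 2"
      using zero_le_power[of "real m" 3] of_nat_0_le_iff[of m] by linarith
    then show "(real m)^2 * (4 + (real m)^2) < (real m + 1)^2 * (2 + (real m)^2)"
      by (simp add: power2_eq_square power3_eq_cube algebra_simps)
  qed
  also have "\<dots> = (real m + 1) * sqrt (2 + (real m)^2)"
    by (simp add: real_sqrt_mult)
  finally show ?thesis .
qed

lemma basis_d_kDTW_less_kdtw_cost_opt_DTW: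
  assumes m: "3 \<le> m" and k: "0 < k" "k \<le> m"
    and opt: "opt_DTW_trav (m + 2) (basis_\<sigma> m) (basis_\<tau> m) T"
  shows "d_kDTW (m + 2) k (basis_\<sigma> m) (basis_\<tau> m) < kdtw_cost (m + 2) k (basis_\<sigma> m) (basis_\<tau> m) T"
proof -
  let ?\<sigma> = "basis_\<sigma> m" and ?\<tau> = "basis_\<tau> m"
  define \<alpha> where "\<alpha> = sqrt (4 + (real m)^2)"
  define \<beta> where "\<beta> = sqrt (2 + (real m)^2)"
  have dist: "euclid_dist (m + 2) (?\<sigma> ! i) (?\<tau> ! j) = (if i = j \<and> 0 < j \<and> j < m - 1 then \<alpha> else \<beta>)"
    if "i < m" "j < m" for i j
    using euclid_dist_basis[OF that] unfolding \<alpha>_def \<beta>_def by (simp add: add.commute)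
  have "\<beta> < \<alpha>" "0 \<le> \<beta>" unfolding \<alpha>_def \<beta>_def by simp_all
  have T: "is_traversal m m T" using opt by (simp add: opt_DTW_trav_def traversals_def)
  have lo: "\<beta> \<le> euclid_dist (m + 2) (?\<sigma> ! i) (?\<tau> ! j)" if "i < m" "j < m" for i j
    using dist[OF that] \<open>\<beta> < \<alpha>\<close> by simp
  have hi: "euclid_dist (m + 2) (?\<sigma> ! i) (?\<tau> ! i) \<le> \<alpha>" if "i < m" for i
    using dist[OF that that] \<open>\<beta> < \<alpha>\<close> by simp
  have "real (length T) * \<beta> \<le> real m * \<alpha>"
    using m by (intro opt_DTW_trav_length_bound[OF opt _ _ _ lo hi]) auto
  have "length T < m + 1"
  proof (rule ccontr)
    assume "\<not> length T < m + 1"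
    then have "(real m + 1) * \<beta> \<le> real (length T) * \<beta>" using \<open>0 \<le> \<beta>\<close> by (intro mult_right_mono) auto
    then show False
      using \<open>real (length T) * \<beta> \<le> real m * \<alpha>\<close> mult_sqrt_4_less_mult_sqrt_2[of m] unfolding \<alpha>_def \<beta>_def by linarith
  qed
  then have "length T = m" using traversal_length_ge[OF T] by simp
  then have "T ! 1 = (1, 1)" using traversal_of_length_diagonal[OF T, of 1] m by simp
  then have "(1, 1) \<in> set T" using nth_mem[of 1 T] \<open>length T = m\<close> m by simp
  moreover have "\<beta> < euclid_dist (m + 2) (?\<sigma> ! 1) (?\<tau> ! 1)" using dist[of 1 1] m \<open>\<beta> < \<alpha>\<close> by simp
  moreover have "\<beta> \<le> euclid_dist (m + 2) (?\<sigma> ! i) (?\<tau> ! j)" if "(i, j) \<in> set T" for i j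
    using lo traversal_cell_less[OF T _ _ that] m by simp
  ultimately have "real k * \<beta> < kdtw_cost (m + 2) k ?\<sigma> ?\<tau> T"
    using k \<open>length T = m\<close> by (intro kdtw_cost_gt) auto
  moreover have "d_kDTW (m + 2) k ?\<sigma> ?\<tau> \<le> real k * \<beta>"
  proof -
    have "shifted_diagonal m 1 \<in> traversals ?\<sigma> ?\<tau>"
      using is_traversal_shifted_diagonal[of 1 m] m by (simp add: traversals_def)
    then have "d_kDTW (m + 2) k ?\<sigma> ?\<tau> \<le> kdtw_cost (m + 2) k ?\<sigma> ?\<tau> (shifted_diagonal m 1)"
      by (rule d_kDTW_le)
    also have "\<dots> \<le> real k * \<beta>"
    proof (rule kdtw_cost_le[OF _ \<open>0 \<le> \<beta>\<close>])
      fix i j assume "(i, j) \<in> set (shifted_diagonal m 1)"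
      then obtain l where "l < m + 1" "i = min l (m - 1)" "j = l - 1" by (auto simp: mem_shifted_diagonal)
      then have "i < m" "j < m" "\<not> (i = j \<and> 0 < j \<and> j < m - 1)" using m by (auto simp: min_def)
      then show "euclid_dist (m + 2) (?\<sigma> ! i) (?\<tau> ! j) \<le> \<beta>" using dist[of i j] by auto
    qed
    finally show ?thesis .
  qed
  ultimately show ?thesis by linarith
qed

lemma exists_kDTW_trav_shorter:
  assumes "16 \<le> m"
  shows "\<exists>d k \<sigma> \<tau>. length \<sigma> = m \<and> length \<tau> = m \<and> 1 \<le> k \<and>
    (\<forall>T1 T2. opt_kDTW_trav d k \<sigma> \<tau> T1 \<longrightarrow> opt_DTW_trav d \<sigma> \<tau> T2 \<longrightarrow>
      real (length T2) - real (length T1) \<ge> 1/16 * real m)"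
proof -
  define s where "s = m div 8"
  have s: "2 \<le> s" "s < m" "4 * s + 2 < m" "m \<le> 16 * s" using assms unfolding s_def by simp_all
  have gap: "real (length T2) - real (length T1) \<ge> 1/16 * real m"
    if "opt_kDTW_trav (Suc s) 1 (helix_curve s m 0) (helix_curve s m s) T1"
      "opt_DTW_trav (Suc s) (helix_curve s m 0) (helix_curve s m s) T2" for T1 T2
  proof -
    have "length T1 = m" by (rule helix_opt_kDTW1_length[OF s(1,2) that(1)])
    moreover have "m + s \<le> length T2" using s(1) by (intro helix_opt_DTW_length[OF _ s(3) that(2)]) simp
    then have "real m + real s \<le> real (length T2)" by (simp flip: of_nat_add)
    moreover have "real m \<le> 16 * real s" using s(4) by (simp flip: of_nat_le_iff)
    ultimately show ?thesis by linarith
  qed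
  show ?thesis
    by (rule exI[of _ "Suc s"], rule exI[of _ 1], rule exI[of _ "helix_curve s m 0"],
        rule exI[of _ "helix_curve s m s"]) (use gap in auto)
qed

lemma exists_kDTW_trav_longer:
  assumes "16 \<le> m"
  shows "\<exists>d k \<sigma> \<tau>. length \<sigma> = m \<and> length \<tau> = m \<and> 1 \<le> k \<and>
    (\<forall>T1 T2. opt_kDTW_trav d k \<sigma> \<tau> T1 \<longrightarrow> opt_DTW_trav d \<sigma> \<tau> T2 \<longrightarrow>
      real (length T1) - real (length T2) \<ge> 1/16 * real m)"
proof -
  have "sqrt (13/5) \<le> (81/50::real)" by (rule real_le_lsqrt) (simp_all add: power2_eq_square)
  then have bound: "sqrt (13/5) * real m \<le> 81/50 * real m" by (intro mult_right_mono) auto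
  have gap: "real (length T1) - real (length T2) \<ge> 1/16 * real m"
    if "opt_kDTW_trav 2 1 (bump_\<sigma> m) (bump_\<tau> m) T1" "opt_DTW_trav 2 (bump_\<sigma> m) (bump_\<tau> m) T2"
    for T1 T2
  proof -
    have "2 * m - 2 \<le> length T1" using assms by (intro bump_opt_kDTW1_length[OF _ that(1)]) simp
    then have "2 * real m - 2 \<le> real (length T1)" using assms by (simp add: of_nat_diff flip: of_nat_le_iff)
    moreover have "real (length T2) \<le> sqrt (13/5) * real m"
      using assms by (intro bump_opt_DTW_length[OF _ that(2)]) simp
    ultimately show ?thesis using bound assms by linarith
  qed
  show ?thesis
    by (rule exI[of _ 2], rule exI[of _ 1], rule exI[of _ "bump_\<sigma> m"], rule exI[of _ "bump_\<tau> m"])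
      (use gap in auto)
qed

lemma exists_d_kDTW_ne_kdtw_cost_opt_DTW:
  assumes "3 \<le> m" "0 < k" "k \<le> m"
  shows "\<exists>d \<sigma> \<tau>. length \<sigma> = m \<and> length \<tau> = m \<and>
    (\<forall>T. opt_DTW_trav d \<sigma> \<tau> T \<longrightarrow> d_kDTW d k \<sigma> \<tau> \<noteq> kdtw_cost d k \<sigma> \<tau> T)"
  by (rule exI[of _ "m + 2"], rule exI[of _ "basis_\<sigma> m"], rule exI[of _ "basis_\<tau> m"])
    (use basis_d_kDTW_less_kdtw_cost_opt_DTW[OF assms] in \<open>auto simp: less_le\<close>)

theorem lemmaA4:
  shows "(\<exists>c::real. c > 0 \<and> (\<exists>M::nat. \<forall>m\<ge>M.
            (\<exists>d k \<sigma> \<tau>. length \<sigma> = m \<and> length \<tau> = m \<and> 1 \<le> k \<and>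
               (\<forall>T1 T2. opt_kDTW_trav d k \<sigma> \<tau> T1 \<longrightarrow> opt_DTW_trav d \<sigma> \<tau> T2 \<longrightarrow>
                  real (length T2) - real (length T1) \<ge> c * real m)) \<and>
            (\<exists>d k \<sigma> \<tau>. length \<sigma> = m \<and> length \<tau> = m \<and> 1 \<le> k \<and>
               (\<forall>T1 T2. opt_kDTW_trav d k \<sigma> \<tau> T1 \<longrightarrow> opt_DTW_trav d \<sigma> \<tau> T2 \<longrightarrow>
                  real (length T1) - real (length T2) \<ge> c * real m))))
       \<and> (\<forall>m k. 5 \<le> m \<longrightarrow> 1 \<le> k \<longrightarrow> k \<le> 4 * (m div 5) \<longrightarrow>
            (\<exists>d \<sigma> \<tau>. length \<sigma> = m \<and> length \<tau> = m \<and>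
               (\<forall>T. opt_DTW_trav d \<sigma> \<tau> T \<longrightarrow> d_kDTW d k \<sigma> \<tau> \<noteq> kdtw_cost d k \<sigma> \<tau> T)))"
  apply (intro conjI allI impI)
  subgoal
    by (rule exI[of _ "1/16"], rule conjI, simp, rule exI[of _ "16::nat"], intro allI impI conjI)
      (erule exists_kDTW_trav_shorter exists_kDTW_trav_longer)+
  subgoal for m k
    by (rule exists_d_kDTW_ne_kdtw_cost_opt_DTW) auto
  done

end
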